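(* Let $X$ be a $\sigma$-monotonically complete Banach lattice, $E\subseteq X$ a closed subspace, and $(x_k,f_k)$ an absolute frame for $E$. Then for each $x\in E$, $\sum_{k=1}^n f_k(x)x_k\xrightarrow{o}x$ in $X$ as $n\to\infty$. In particular, for any Banach lattice $X$, each absolute frame for a closed subspace $E\subseteq X$ has expansions $\sum_{k=1}^n f_k(x)x_k$ that order converge to $x$ in $X^{**}$.
   Context: A Banach lattice is $\sigma$-monotonically complete if every increasing norm bounded sequence of positive elements has a supremum. A (Schauder) frame for a Banach space $E$ is a sequence $(x_k,f_k)\in E\times E^*$ such that $x=\sum_{k=1}^\infty f_k(x)x_k$ (norm convergence) for all $x\in E$. For $E$ a closed subspace of a Banach lattice, the frame is absolute if for each $x\in E$, $\sup_n\|\sum_{k=1}^n|f_k(x)x_k|\|<\infty$. Order convergence $y_n\xrightarrow{o}y$ means there is a net $z_\beta\downarrow0$ such that for every $\beta$ there is $n_\beta$ with $|y_n-y|\le z_\beta$ for all $n\ge n_\beta$. *)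

theory Defs
  imports "HOL-Analysis.Analysis"
begin

definition labs :: "'a::{lattice, uminus} \<Rightarrow> 'a" where
  "labs x = sup x (- x)"

class banach_lattice = banach + ordered_real_vector + lattice +
  assumes lattice_norm: "sup x (- x) \<le> sup y (- y) \<Longrightarrow> norm x \<le> norm y"

text \<open>Least upper / greatest lower bounds in a partial order (the lattice need not be complete).\<close>

definition is_sup_of :: "'a::order set \<Rightarrow> 'a \<Rightarrow> bool" where
  "is_sup_of A s \<longleftrightarrow> (\<forall>a\<in>A. a \<le> s) \<and> (\<forall>u. (\<forall>a\<in>A. a \<le> u) \<longrightarrow> s \<le> u)"

definition is_inf_of :: "'a::order set \<Rightarrow> 'a \<Rightarrow> bool" where
  "is_inf_of A s \<longleftrightarrow> (\<forall>a\<in>A. s \<le> a) \<and> (\<forall>u. (\<forall>a\<in>A. u \<le> a) \<longrightarrow> u \<le> s)"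

definition sigma_monotonically_complete :: "'a::banach_lattice itself \<Rightarrow> bool" where
  "sigma_monotonically_complete _ \<longleftrightarrow>
     (\<forall>y::nat \<Rightarrow> 'a. incseq y \<and> (\<forall>n. 0 \<le> y n) \<and> (\<exists>C. \<forall>n. norm (y n) \<le> C)
        \<longrightarrow> (\<exists>s. is_sup_of (range y) s))"

text \<open>Order convergence.  A net \<open>z\<^sub>\<beta> \<down> 0\<close> is represented by its range: a nonempty
  downward directed set \<open>D\<close> whose infimum is \<open>0\<close>.\<close>

definition downward_directed :: "('a \<Rightarrow> 'a \<Rightarrow> bool) \<Rightarrow> 'a set \<Rightarrow> bool" where
  "downward_directed le D \<longleftrightarrow> (\<forall>a\<in>D. \<forall>b\<in>D. \<exists>c\<in>D. le c a \<and> le c b)"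

definition order_convergent :: "(nat \<Rightarrow> 'a::banach_lattice) \<Rightarrow> 'a \<Rightarrow> bool" where
  "order_convergent y l \<longleftrightarrow>
     (\<exists>D. D \<noteq> {} \<and> downward_directed (\<le>) D \<and> is_inf_of D 0 \<and>
          (\<forall>z\<in>D. \<exists>N. \<forall>n\<ge>N. labs (y n - l) \<le> z))"

definition closed_subspace :: "'a::real_normed_vector set \<Rightarrow> bool" where
  "closed_subspace E \<longleftrightarrow> subspace E \<and> closed E"

definition bounded_linear_on :: "'a::real_normed_vector set \<Rightarrow> ('a \<Rightarrow> real) \<Rightarrow> bool" where
  "bounded_linear_on E f \<longleftrightarrow>
     (\<forall>x\<in>E. \<forall>y\<in>E. f (x + y) = f x + f y) \<and> (\<forall>c. \<forall>x\<in>E. f (c *\<^sub>R x) = c * f x) \<and>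
     (\<exists>C. \<forall>x\<in>E. \<bar>f x\<bar> \<le> C * norm x)"

text \<open>Frames are indexed from \<open>0\<close> instead of \<open>1\<close>.\<close>
definition is_frame :: "'a::real_normed_vector set \<Rightarrow> (nat \<Rightarrow> 'a) \<Rightarrow> (nat \<Rightarrow> 'a \<Rightarrow> real) \<Rightarrow> bool" where
  "is_frame E xs fs \<longleftrightarrow>
     (\<forall>k. xs k \<in> E) \<and> (\<forall>k. bounded_linear_on E (fs k)) \<and>
     (\<forall>x\<in>E. (\<lambda>n. \<Sum>k<n. fs k x *\<^sub>R xs k) \<longlonglongrightarrow> x)"

definition is_absolute_frame :: "'a::banach_lattice set \<Rightarrow> (nat \<Rightarrow> 'a) \<Rightarrow> (nat \<Rightarrow> 'a \<Rightarrow> real) \<Rightarrow> bool" where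
  "is_absolute_frame E xs fs \<longleftrightarrow> is_frame E xs fs \<and>
     (\<forall>x\<in>E. \<exists>C. \<forall>n. norm (\<Sum>k<n. labs (fs k x *\<^sub>R xs k)) \<le> C)"

definition dual_pos :: "('a::banach_lattice \<Rightarrow>\<^sub>L real) \<Rightarrow> bool" where
  "dual_pos f \<longleftrightarrow> (\<forall>x. 0 \<le> x \<longrightarrow> 0 \<le> blinfun_apply f x)"

definition bidual_le :: "(('a::banach_lattice \<Rightarrow>\<^sub>L real) \<Rightarrow>\<^sub>L real) \<Rightarrow> (('a \<Rightarrow>\<^sub>L real) \<Rightarrow>\<^sub>L real) \<Rightarrow> bool" where
  "bidual_le \<phi> \<psi> \<longleftrightarrow> (\<forall>f. dual_pos f \<longrightarrow> blinfun_apply \<phi> f \<le> blinfun_apply \<psi> f)"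

definition bidual_embed :: "'a::banach_lattice \<Rightarrow> (('a \<Rightarrow>\<^sub>L real) \<Rightarrow>\<^sub>L real)" where
  "bidual_embed x = Blinfun (\<lambda>f. blinfun_apply f x)"

text \<open>Order convergence in \<open>X\<^sup>*\<^sup>*\<close>; \<open>|a| \<le> z\<close> is written as \<open>-z \<le> a \<le> z\<close>
  (equivalent in any vector lattice), since the lattice operations of \<open>X\<^sup>*\<^sup>*\<close> are not
  set up as a type class instance.\<close>
definition bidual_order_convergent ::
  "(nat \<Rightarrow> (('a::banach_lattice \<Rightarrow>\<^sub>L real) \<Rightarrow>\<^sub>L real)) \<Rightarrow> (('a \<Rightarrow>\<^sub>L real) \<Rightarrow>\<^sub>L real) \<Rightarrow> bool" where
  "bidual_order_convergent y l \<longleftrightarrow>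
     (\<exists>D. D \<noteq> {} \<and> downward_directed bidual_le D \<and>
          (\<forall>z\<in>D. bidual_le 0 z) \<and> (\<forall>u. (\<forall>z\<in>D. bidual_le u z) \<longrightarrow> bidual_le u 0) \<and>
          (\<forall>z\<in>D. \<exists>N. \<forall>n\<ge>N. bidual_le (- z) (y n - l) \<and> bidual_le (y n - l) z))"

end

theory Submission
  imports Defs
begin

(* Write s_n for the partial sums of the expansion of x and y_n = sum_{k<n} |f_k(x) x_k|.
   Then |s_N - s_n| <= y_N - y_n for n <= N, and (y_n) is increasing and norm bounded.
   If (y_n) has a supremum S, which sigma-monotone completeness guarantees, letting
   N tend to infinity (order intervals are norm closed) gives |s_n - x| <= S - y_n,
   and S - y_n decreases to 0.  In the bidual the supremum always exists: a weak*
   cluster point Phi of (y_n), taken as a limit along a free ultrafilter, satisfies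
   Phi g = sup_n g(y_n) for every positive functional g, and the same estimate,
   tested against positive functionals, holds with Phi - y_n. *)

section \<open>Absolute value in vector lattices\<close>

lemma labs_ge:
  fixes v :: "'a::{lattice, uminus}"
  shows "v \<le> labs v" and "- v \<le> labs v"
  by (simp_all add: labs_def)

lemma labs_le_iff:
  fixes v :: "'a::{lattice, uminus}"
  shows "labs v \<le> c \<longleftrightarrow> v \<le> c \<and> - v \<le> c"
  by (simp add: labs_def)

lemma nonneg_if_double_nonneg:
  fixes v :: "'a::ordered_real_vector"
  assumes "0 \<le> v + v"
  shows "0 \<le> v"
proof -
  have "v = (1/2::real) *\<^sub>R (v + v)"
    by (simp flip: scaleR_add_left)
  also have "0 \<le> \<dots>"
    using assms by (intro scaleR_nonneg_nonneg) auto
  finally show ?thesis .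
qed

lemma labs_nonneg:
  fixes v :: "'a::{ordered_real_vector, lattice}"
  shows "0 \<le> labs v"
proof -
  have "v + - v \<le> labs v + labs v"
    by (intro add_mono labs_ge)
  then have "0 \<le> labs v + labs v"
    by simp
  then show ?thesis
    by (rule nonneg_if_double_nonneg)
qed

lemma labs_eq_self_iff:
  fixes v :: "'a::{ordered_real_vector, lattice}"
  shows "labs v = v \<longleftrightarrow> 0 \<le> v"
proof
  assume "labs v = v"
  then have "- v + v \<le> v + v"
    using labs_ge(2)[of v] by (intro add_right_mono) simp
  then have "0 \<le> v + v"
    by simp
  then show "0 \<le> v"
    by (rule nonneg_if_double_nonneg)
next
  assume "0 \<le> v"
  then have "- v \<le> v"
    by (meson neg_le_0_iff_le order_trans)
  then show "labs v = v"
    by (simp add: labs_def sup_absorb1)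
qed

lemma labs_minus:
  fixes v :: "'a::{ordered_real_vector, lattice}"
  shows "labs (- v) = labs v"
  by (simp add: labs_def sup_commute)

lemma labs_add_le:
  fixes a b :: "'a::{ordered_real_vector, lattice}"
  shows "labs (a + b) \<le> labs a + labs b"
  unfolding labs_le_iff minus_add_distrib
  by (intro conjI add_mono labs_ge)

lemma labs_sum_le:
  fixes f :: "'i \<Rightarrow> 'a::{ordered_real_vector, lattice}"
  shows "labs (sum f A) \<le> (\<Sum>k\<in>A. labs (f k))"
proof (induction A rule: infinite_finite_induct)
  case (insert k A)
  have "labs (f k + sum f A) \<le> labs (f k) + labs (sum f A)"
    by (rule labs_add_le)
  also have "\<dots> \<le> labs (f k) + (\<Sum>k\<in>A. labs (f k))"
    using insert.IH by (rule add_left_mono)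
  finally show ?case
    using insert.hyps by simp
qed (simp_all add: labs_def)

lemma labs_diff_labs_le:
  fixes a b :: "'a::{ordered_real_vector, lattice}"
  shows "labs (labs a - labs b) \<le> labs (a - b)"
proof -
  have "labs a \<le> labs (a - b) + labs b"
    using labs_add_le[of "a - b" b] by simp
  moreover have "labs b \<le> labs (a - b) + labs a"
    using labs_add_le[of "b - a" a] labs_minus[of "a - b"] by simp
  ultimately show ?thesis
    by (simp add: labs_le_iff diff_le_eq add.commute)
qed

lemma norm_labs_diff_le:
  fixes a b :: "'a::banach_lattice"
  shows "norm (labs a - labs b) \<le> norm (a - b)"
  using labs_diff_labs_le[of a b] unfolding labs_def by (intro lattice_norm) simp

lemma tendsto_labs:
  fixes f :: "'i \<Rightarrow> 'a::banach_lattice"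
  assumes "(f \<longlongrightarrow> l) F"
  shows "((\<lambda>i. labs (f i)) \<longlongrightarrow> labs l) F"
proof (rule LIM_zero_cancel, rule Lim_null_comparison)
  show "\<forall>\<^sub>F i in F. norm (labs (f i) - labs l) \<le> norm (f i - l)"
    by (simp add: norm_labs_diff_le)
  show "((\<lambda>i. norm (f i - l)) \<longlongrightarrow> 0) F"
    using assms by (simp add: LIM_zero tendsto_norm_zero)
qed

lemma lattice_tendsto_upperbound:
  fixes f :: "'i \<Rightarrow> 'a::banach_lattice"
  assumes "(f \<longlongrightarrow> l) F" and "\<forall>\<^sub>F i in F. f i \<le> c" and "F \<noteq> bot"
  shows "l \<le> c"
proof -
  have "((\<lambda>i. labs (c - f i) - (c - f i)) \<longlongrightarrow> labs (c - l) - (c - l)) F"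
    using assms(1) by (intro tendsto_intros tendsto_labs)
  moreover have "\<forall>\<^sub>F i in F. labs (c - f i) - (c - f i) = 0"
    using assms(2) by eventually_elim (simp add: labs_eq_self_iff)
  ultimately have "labs (c - l) - (c - l) = 0"
    using assms(3) by (metis tendsto_unique tendsto_eventually)
  then show ?thesis
    by (simp add: labs_eq_self_iff)
qed

lemma labs_real: "labs (x::real) = \<bar>x\<bar>"
  by (simp add: labs_def sup_max abs_if max_def)

(* Lets the estimates for sequences in a Banach lattice be applied to the scalar
   sequences g(s n) obtained by testing against positive functionals g. *)
instance real :: banach_lattice
  by standard (metis labs_def labs_real real_norm_def)

section \<open>Sequences with dominated increments\<close>

definition dominates :: "(nat \<Rightarrow> 'a::{lattice, minus, uminus}) \<Rightarrow> (nat \<Rightarrow> 'a) \<Rightarrow> bool" where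
  "dominates y s \<longleftrightarrow> (\<forall>n N. n \<le> N \<longrightarrow> labs (s N - s n) \<le> y N - y n)"

lemma dominates_incseq:
  fixes y :: "nat \<Rightarrow> 'a::{ordered_real_vector, lattice}"
  assumes "dominates y s"
  shows "incseq y"
  unfolding incseq_def
proof (intro allI impI)
  fix n N :: nat
  assume "n \<le> N"
  then have "labs (s N - s n) \<le> y N - y n"
    using assms by (simp add: dominates_def)
  then have "0 \<le> y N - y n"
    using labs_nonneg order_trans by blast
  then show "y n \<le> y N"
    by simp
qed

lemma dominates_partial_sums:
  fixes a :: "nat \<Rightarrow> 'a::{ordered_real_vector, lattice}"
  shows "dominates (\<lambda>n. \<Sum>k<n. labs (a k)) (\<lambda>n. \<Sum>k<n. a k)"
  unfolding dominates_def
proof (intro allI impI)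
  fix n N :: nat
  assume "n \<le> N"
  then have "(\<Sum>k<N. f k) - (\<Sum>k<n. f k) = (\<Sum>k\<in>{n..<N}. f k)" for f :: "nat \<Rightarrow> 'a"
    by (simp add: atLeast0LessThan[symmetric] sum_diff_nat_ivl)
  then show "labs ((\<Sum>k<N. a k) - (\<Sum>k<n. a k)) \<le> (\<Sum>k<N. labs (a k)) - (\<Sum>k<n. labs (a k))"
    by (simp add: labs_sum_le)
qed

lemma dominated_limit_bound:
  fixes s y :: "nat \<Rightarrow> 'a::banach_lattice"
  assumes "s \<longlonglongrightarrow> x" and "dominates y s" and "\<And>N. y N \<le> S"
  shows "labs (s n - x) \<le> S - y n"
proof -
  have "labs (x - s n) \<le> S - y n"
  proof (rule lattice_tendsto_upperbound)
    show "(\<lambda>N. labs (s N - s n)) \<longlonglongrightarrow> labs (x - s n)"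
      using assms(1) by (intro tendsto_labs tendsto_diff tendsto_const)
    show "\<forall>\<^sub>F N in sequentially. labs (s N - s n) \<le> S - y n"
      using eventually_ge_at_top[of n]
      by eventually_elim (meson assms(2,3) dominates_def diff_right_mono order_trans)
  qed simp
  then show ?thesis
    by (metis labs_minus minus_diff_eq)
qed

lemma order_convergentI:
  fixes s z :: "nat \<Rightarrow> 'a::banach_lattice"
  assumes "decseq z" and "is_inf_of (range z) 0" and "\<And>n. labs (s n - x) \<le> z n"
  shows "order_convergent s x"
  unfolding order_convergent_def
proof (intro exI conjI)
  show "range z \<noteq> {}"
    by simp
  show "downward_directed (\<le>) (range z)"
    using \<open>decseq z\<close> unfolding downward_directed_def decseq_def
    by (metis max.cobounded1 max.cobounded2 rangeE rangeI)
  show "\<forall>w\<in>range z. \<exists>N. \<forall>n\<ge>N. labs (s n - x) \<le> w"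
    using assms(1,3) by (metis decseq_def order_trans rangeE)
qed fact

lemma order_convergent_if_dominated:
  fixes s y :: "nat \<Rightarrow> 'a::banach_lattice"
  assumes "s \<longlonglongrightarrow> x" and "dominates y s" and sup: "is_sup_of (range y) S"
  shows "order_convergent s x"
proof (rule order_convergentI)
  have y_le: "y n \<le> S" for n
    using sup by (simp add: is_sup_of_def)
  show "decseq (\<lambda>n. S - y n)"
    using dominates_incseq[OF assms(2)] by (simp add: incseq_def decseq_def diff_left_mono)
  show "labs (s n - x) \<le> S - y n" for n
    using assms(1,2) y_le by (rule dominated_limit_bound)
  show "is_inf_of (range (\<lambda>n. S - y n)) 0"
    unfolding is_inf_of_def
  proof (intro conjI allI impI ballI)
    fix u
    assume "\<forall>d\<in>range (\<lambda>n. S - y n). u \<le> d"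
    then have "\<forall>z\<in>range y. z \<le> S - u"
      by (auto simp: le_diff_eq add.commute)
    then have "S \<le> S - u"
      using sup by (simp add: is_sup_of_def)
    then show "u \<le> 0"
      by simp
  qed (use y_le in auto)
qed

section \<open>Ultrafilters\<close>

definition is_ultrafilter :: "'a filter \<Rightarrow> bool" where
  "is_ultrafilter U \<longleftrightarrow> U \<noteq> bot \<and> (\<forall>P. eventually P U \<or> eventually (\<lambda>x. \<not> P x) U)"

lemma ultrafilter_finer_exists:
  fixes F :: "'a filter"
  assumes "F \<noteq> bot"
  shows "\<exists>U. is_ultrafilter U \<and> U \<le> F"
proof -
  define A where "A = {G. G \<noteq> bot \<and> G \<le> F}"
  have "\<exists>U\<in>A. \<forall>G\<in>A. G \<le> U \<longrightarrow> G = U"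
  proof (rule predicate_Zorn)
    show "partial_order_on A (relation_of (\<lambda>G H. H \<le> G) A)"
      by (rule partial_order_on_relation_ofI) auto
  next
    fix C
    assume C: "C \<in> Chains (relation_of (\<lambda>G H. H \<le> G) A)"
    show "\<exists>U\<in>A. \<forall>G\<in>C. U \<le> G"
    proof (cases "C = {}")
      case True
      then show ?thesis
        using assms by (auto simp: A_def)
    next
      case False
      have "C \<subseteq> A"
        using C by (rule Chains_relation_of)
      have total: "G \<le> H \<or> H \<le> G" if "G \<in> C" "H \<in> C" for G H
        using C that by (auto simp: Chains_def relation_of_def)
      have "\<exists>K\<in>C. K \<le> inf G H" if "G \<in> C" "H \<in> C" for G H
        using total[OF that] that by (metis inf.absorb1 inf.absorb2 order_refl)
      then have ev: "eventually P (Inf C) \<longleftrightarrow> (\<exists>G\<in>C. eventually P G)" for P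
        using False by (intro eventually_Inf_base) auto
      have "Inf C \<noteq> bot"
        using ev[of "\<lambda>_. False"] \<open>C \<subseteq> A\<close> by (auto simp: A_def trivial_limit_def)
      moreover have "Inf C \<le> F"
        using False \<open>C \<subseteq> A\<close> by (auto simp: A_def intro: Inf_lower2)
      ultimately show ?thesis
        by (auto simp: A_def intro!: bexI[of _ "Inf C"] Inf_lower)
    qed
  qed
  then obtain U where "U \<in> A" and maximal: "\<And>G. G \<in> A \<Longrightarrow> G \<le> U \<Longrightarrow> G = U"
    by blast
  have "eventually P U \<or> eventually (\<lambda>x. \<not> P x) U" for P
  proof (rule disjCI)
    assume "\<not> eventually (\<lambda>x. \<not> P x) U"
    then have "inf U (principal {x. P x}) \<noteq> bot"
      by (simp add: trivial_limit_def eventually_inf_principal)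
    then have "inf U (principal {x. P x}) = U"
      using \<open>U \<in> A\<close> by (intro maximal) (auto simp: A_def intro: le_infI1)
    moreover have "eventually P (inf U (principal {x. P x}))"
      by (simp add: eventually_inf_principal)
    ultimately show "eventually P U"
      by simp
  qed
  with \<open>U \<in> A\<close> show ?thesis
    by (auto simp: is_ultrafilter_def A_def)
qed

lemma ultrafilter_tendsto_in_compact:
  fixes f :: "'a \<Rightarrow> 'b::topological_space"
  assumes U: "is_ultrafilter U" and "compact K" and "\<forall>\<^sub>F x in U. f x \<in> K"
  shows "\<exists>l. (f \<longlongrightarrow> l) U"
proof -
  have "filtermap f U \<noteq> bot"
    using U by (simp add: is_ultrafilter_def filtermap_bot_iff)
  then obtain l where l: "inf (nhds l) (filtermap f U) \<noteq> bot"
    using \<open>compact K\<close> assms(3) unfolding compact_filter by (auto simp: eventually_filtermap)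
  have "(f \<longlongrightarrow> l) U"
  proof (rule topological_tendstoI)
    fix S
    assume "open S" "l \<in> S"
    show "\<forall>\<^sub>F x in U. f x \<in> S"
    proof (rule ccontr)
      assume "\<not> (\<forall>\<^sub>F x in U. f x \<in> S)"
      then have "\<forall>\<^sub>F y in filtermap f U. y \<notin> S"
        using U by (auto simp: is_ultrafilter_def eventually_filtermap)
      moreover have "\<forall>\<^sub>F y in nhds l. y \<in> S"
        using \<open>open S\<close> \<open>l \<in> S\<close> by (rule eventually_nhds_in_open)
      ultimately have "\<forall>\<^sub>F y in inf (nhds l) (filtermap f U). False"
        unfolding eventually_inf by blast
      with l show False
        by (simp add: trivial_limit_def)
    qed
  qed
  then show ?thesis ..
qed

section \<open>Positive functionals and the bidual\<close>

lemma bidual_embed_apply: "blinfun_apply (bidual_embed v) g = blinfun_apply g v"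
  unfolding bidual_embed_def
  by (simp add: bounded_linear_Blinfun_apply blinfun.bounded_linear_left)

lemma dual_pos_mono: "dual_pos g \<Longrightarrow> v \<le> w \<Longrightarrow> blinfun_apply g v \<le> blinfun_apply g w"
  unfolding dual_pos_def by (metis blinfun.diff_right diff_ge_0_iff_ge)

lemma dual_pos_abs_le:
  assumes "dual_pos g"
  shows "\<bar>blinfun_apply g v\<bar> \<le> blinfun_apply g (labs v)"
  using dual_pos_mono[OF assms labs_ge(1)] dual_pos_mono[OF assms labs_ge(2)]
  by (simp add: blinfun.minus_right abs_le_iff)

lemma dominates_dual_pos:
  assumes "dual_pos g" and "dominates y s"
  shows "dominates (\<lambda>n. blinfun_apply g (y n)) (\<lambda>n. blinfun_apply g (s n))"
  unfolding dominates_def labs_real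
proof (intro allI impI)
  fix n N :: nat
  assume "n \<le> N"
  have "\<bar>blinfun_apply g (s N) - blinfun_apply g (s n)\<bar> = \<bar>blinfun_apply g (s N - s n)\<bar>"
    by (simp add: blinfun.diff_right)
  also have "\<dots> \<le> blinfun_apply g (labs (s N - s n))"
    using assms(1) by (rule dual_pos_abs_le)
  also have "\<dots> \<le> blinfun_apply g (y N - y n)"
    using assms \<open>n \<le> N\<close> by (simp add: dominates_def dual_pos_mono)
  finally show "\<bar>blinfun_apply g (s N) - blinfun_apply g (s n)\<bar>
      \<le> blinfun_apply g (y N) - blinfun_apply g (y n)"
    by (simp add: blinfun.diff_right)
qed

lemma abs_blinfun_apply_le:
  assumes "norm v \<le> C"
  shows "\<bar>blinfun_apply g v\<bar> \<le> norm g * C"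
  using norm_blinfun[of g v] assms
  by (metis order_trans mult_left_mono norm_ge_zero real_norm_def)

lemma bidual_weak_star_cluster_point:
  fixes y :: "nat \<Rightarrow> 'a::real_normed_vector"
  assumes bound: "\<And>n. norm (y n) \<le> C"
  shows "\<exists>\<Phi>::('a \<Rightarrow>\<^sub>L real) \<Rightarrow>\<^sub>L real.
           \<forall>g L. (\<lambda>n. blinfun_apply g (y n)) \<longlonglongrightarrow> L \<longrightarrow> blinfun_apply \<Phi> g = L"
proof -
  obtain U where U: "is_ultrafilter U" and "U \<le> sequentially"
    using ultrafilter_finer_exists[OF sequentially_bot] by blast
  then have "U \<noteq> bot"
    by (simp add: is_ultrafilter_def)
  have g_bound: "\<bar>blinfun_apply g (y n)\<bar> \<le> norm g * C" for g :: "'a \<Rightarrow>\<^sub>L real" and n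
    using bound by (rule abs_blinfun_apply_le)
  have "\<forall>g::'a \<Rightarrow>\<^sub>L real. \<exists>l. ((\<lambda>n. blinfun_apply g (y n)) \<longlongrightarrow> l) U"
  proof
    fix g :: "'a \<Rightarrow>\<^sub>L real"
    show "\<exists>l. ((\<lambda>n. blinfun_apply g (y n)) \<longlongrightarrow> l) U"
      using g_bound[of g]
      by (intro ultrafilter_tendsto_in_compact[OF U, of "cball 0 (norm g * C)"])
        (auto intro: always_eventually)
  qed
  then obtain \<Lambda> :: "('a \<Rightarrow>\<^sub>L real) \<Rightarrow> real"
    where \<Lambda>: "\<And>g. ((\<lambda>n. blinfun_apply g (y n)) \<longlongrightarrow> \<Lambda> g) U"
    by (metis choice)
  have lim_unique: "\<Lambda> g = l" if "((\<lambda>n. blinfun_apply g (y n)) \<longlongrightarrow> l) U" for g l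
    using tendsto_unique[OF \<open>U \<noteq> bot\<close> \<Lambda> that] .
  have "bounded_linear \<Lambda>"
  proof (rule bounded_linear_intro[where K = C])
    show "\<Lambda> (g + h) = \<Lambda> g + \<Lambda> h" for g h
      using tendsto_add[OF \<Lambda>[of g] \<Lambda>[of h]] by (intro lim_unique) (simp add: blinfun.add_left)
    show "\<Lambda> (r *\<^sub>R g) = r *\<^sub>R \<Lambda> g" for r g
      using tendsto_mult_left[OF \<Lambda>[of g], of r]
      by (intro lim_unique) (simp add: blinfun.scaleR_left)
    show "norm (\<Lambda> g) \<le> norm g * C" for g
      using tendsto_le[OF \<open>U \<noteq> bot\<close> tendsto_const tendsto_rabs[OF \<Lambda>[of g]]] g_bound by simp
  qed
  moreover have "\<Lambda> g = L" if "(\<lambda>n. blinfun_apply g (y n)) \<longlonglongrightarrow> L" for g L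
    using tendsto_mono[OF \<open>U \<le> sequentially\<close> that] by (rule lim_unique)
  ultimately show ?thesis
    by (intro exI[of _ "Blinfun \<Lambda>"]) (simp add: bounded_linear_Blinfun_apply)
qed

lemma bidual_order_convergentI:
  fixes u z :: "nat \<Rightarrow> ('a::banach_lattice \<Rightarrow>\<^sub>L real) \<Rightarrow>\<^sub>L real"
  assumes antimono: "\<And>g m n. dual_pos g \<Longrightarrow> m \<le> n \<Longrightarrow> blinfun_apply (z n) g \<le> blinfun_apply (z m) g"
    and lim: "\<And>g. dual_pos g \<Longrightarrow> (\<lambda>n. blinfun_apply (z n) g) \<longlonglongrightarrow> 0"
    and bound: "\<And>g n. dual_pos g \<Longrightarrow> \<bar>blinfun_apply (u n - v) g\<bar> \<le> blinfun_apply (z n) g"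
  shows "bidual_order_convergent u v"
  unfolding bidual_order_convergent_def
proof (intro exI conjI)
  show "range z \<noteq> {}"
    by simp
  show "downward_directed bidual_le (range z)"
    unfolding downward_directed_def bidual_le_def
    by (metis antimono max.cobounded1 max.cobounded2 rangeE rangeI)
  show "\<forall>w\<in>range z. bidual_le 0 w"
    unfolding bidual_le_def
    using antimono lim by (auto intro: decseq_ge simp: decseq_def)
  show "\<forall>w. (\<forall>z'\<in>range z. bidual_le w z') \<longrightarrow> bidual_le w 0"
    unfolding bidual_le_def
  proof (intro allI impI)
    fix w and g :: "'a \<Rightarrow>\<^sub>L real"
    assume "\<forall>z'\<in>range z. \<forall>g. dual_pos g \<longrightarrow> blinfun_apply w g \<le> blinfun_apply z' g"
      and "dual_pos g"
    then have "blinfun_apply w g \<le> blinfun_apply (z n) g" for n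
      by blast
    with lim[OF \<open>dual_pos g\<close>] show "blinfun_apply w g \<le> blinfun_apply 0 g"
      by (simp add: tendsto_lowerbound)
  qed
  show "\<forall>w\<in>range z. \<exists>N. \<forall>n\<ge>N. bidual_le (- w) (u n - v) \<and> bidual_le (u n - v) w"
  proof (intro ballI)
    fix w
    assume "w \<in> range z"
    then obtain m where "w = z m"
      by blast
    have "- blinfun_apply (z m) g \<le> blinfun_apply (u n - v) g
        \<and> blinfun_apply (u n - v) g \<le> blinfun_apply (z m) g" if "dual_pos g" "m \<le> n" for g n
      using bound[OF that(1), of n] antimono[OF that] by linarith
    then show "\<exists>N. \<forall>n\<ge>N. bidual_le (- w) (u n - v) \<and> bidual_le (u n - v) w"
      unfolding \<open>w = z m\<close> bidual_le_def by (auto simp: blinfun.minus_left)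
  qed
qed

lemma bidual_sup_of_incseq:
  fixes y :: "nat \<Rightarrow> 'a::banach_lattice"
  assumes "incseq y" and bound: "\<And>n. norm (y n) \<le> C"
  obtains \<Phi> where "\<And>g. dual_pos g \<Longrightarrow> (\<lambda>n. blinfun_apply g (y n)) \<longlonglongrightarrow> blinfun_apply \<Phi> g"
proof -
  obtain \<Phi> :: "('a \<Rightarrow>\<^sub>L real) \<Rightarrow>\<^sub>L real"
    where \<Phi>: "\<And>g L. (\<lambda>n. blinfun_apply g (y n)) \<longlonglongrightarrow> L \<Longrightarrow> blinfun_apply \<Phi> g = L"
    using bidual_weak_star_cluster_point[of y C] bound by blast
  have "(\<lambda>n. blinfun_apply g (y n)) \<longlonglongrightarrow> blinfun_apply \<Phi> g" if "dual_pos g" for g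
  proof -
    have "bdd_above (range (\<lambda>n. blinfun_apply g (y n)))"
      using abs_blinfun_apply_le[OF bound]
      by (intro bdd_aboveI[of _ "norm g * C"]) (auto simp: abs_le_iff)
    moreover have "incseq (\<lambda>n. blinfun_apply g (y n))"
      using \<open>incseq y\<close> that by (simp add: incseq_def dual_pos_mono)
    ultimately have lim: "(\<lambda>n. blinfun_apply g (y n)) \<longlonglongrightarrow> (SUP n. blinfun_apply g (y n))"
      by (rule LIMSEQ_incseq_SUP)
    then show ?thesis
      using \<Phi>[OF lim] by simp
  qed
  then show ?thesis
    by (rule that)
qed

lemma bidual_order_convergent_if_dominated:
  fixes s y :: "nat \<Rightarrow> 'a::banach_lattice"
  assumes "s \<longlonglongrightarrow> x" and dom: "dominates y s" and bound: "\<And>n. norm (y n) \<le> C"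
  shows "bidual_order_convergent (\<lambda>n. bidual_embed (s n)) (bidual_embed x)"
proof -
  have "incseq y"
    using dom by (rule dominates_incseq)
  obtain \<Phi> where y_lim: "\<And>g. dual_pos g \<Longrightarrow> (\<lambda>n. blinfun_apply g (y n)) \<longlonglongrightarrow> blinfun_apply \<Phi> g"
    using bidual_sup_of_incseq[OF \<open>incseq y\<close> bound] by blast
  have y_le: "blinfun_apply g (y n) \<le> blinfun_apply \<Phi> g" if "dual_pos g" for g n
    using \<open>incseq y\<close> that y_lim[OF that] by (intro incseq_le) (auto simp: incseq_def dual_pos_mono)
  show ?thesis
  proof (rule bidual_order_convergentI[where z = "\<lambda>n. \<Phi> - bidual_embed (y n)"])
    fix g :: "'a \<Rightarrow>\<^sub>L real"
    assume "dual_pos g"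
    show "blinfun_apply (\<Phi> - bidual_embed (y n)) g \<le> blinfun_apply (\<Phi> - bidual_embed (y m)) g"
      if "m \<le> n" for m n
      using \<open>incseq y\<close> \<open>dual_pos g\<close> that
      by (simp add: blinfun.diff_left bidual_embed_apply incseq_def dual_pos_mono)
    show "(\<lambda>n. blinfun_apply (\<Phi> - bidual_embed (y n)) g) \<longlonglongrightarrow> 0"
      using tendsto_diff[OF tendsto_const y_lim[OF \<open>dual_pos g\<close>], of "blinfun_apply \<Phi> g"]
      by (simp add: blinfun.diff_left bidual_embed_apply)
    have "(\<lambda>n. blinfun_apply g (s n)) \<longlonglongrightarrow> blinfun_apply g x"
      using \<open>s \<longlonglongrightarrow> x\<close> by (intro blinfun.tendsto tendsto_const)
    from this dominates_dual_pos[OF \<open>dual_pos g\<close> dom] y_le[OF \<open>dual_pos g\<close>]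
    have "labs (blinfun_apply g (s n) - blinfun_apply g x) \<le> blinfun_apply \<Phi> g - blinfun_apply g (y n)"
      for n by (rule dominated_limit_bound)
    then show "\<bar>blinfun_apply (bidual_embed (s n) - bidual_embed x) g\<bar>
        \<le> blinfun_apply (\<Phi> - bidual_embed (y n)) g" for n
      by (simp add: blinfun.diff_left bidual_embed_apply labs_real)
  qed
qed

section \<open>Absolute frames\<close>

lemma absolute_frame_expansion:
  assumes "is_absolute_frame E xs fs" and "x \<in> E"
  shows "(\<lambda>n. \<Sum>k<n. fs k x *\<^sub>R xs k) \<longlonglongrightarrow> x"
    and "dominates (\<lambda>n. \<Sum>k<n. labs (fs k x *\<^sub>R xs k)) (\<lambda>n. \<Sum>k<n. fs k x *\<^sub>R xs k)"
    and "\<exists>C. \<forall>n. norm (\<Sum>k<n. labs (fs k x *\<^sub>R xs k)) \<le> C"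
  using assms dominates_partial_sums by (auto simp: is_absolute_frame_def is_frame_def)

lemma sigma_monotonically_complete_sup_exists:
  fixes y :: "nat \<Rightarrow> 'a::banach_lattice"
  assumes "sigma_monotonically_complete TYPE('a)"
    and "dominates y s" and "0 \<le> y 0" and "\<And>n. norm (y n) \<le> C"
  shows "\<exists>S. is_sup_of (range y) S"
proof -
  have "incseq y"
    using assms(2) by (rule dominates_incseq)
  then have "0 \<le> y n" for n
    using assms(3) by (meson incseq_def le0 order_trans)
  with \<open>incseq y\<close> assms(1,4) show ?thesis
    unfolding sigma_monotonically_complete_def by blast
qed

theorem proposition3p17:
  fixes E :: "'a::banach_lattice set"
    and xs :: "nat \<Rightarrow> 'a" and fs :: "nat \<Rightarrow> 'a \<Rightarrow> real"
  assumes "closed_subspace E"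
    and "is_absolute_frame E xs fs"
  shows "(sigma_monotonically_complete TYPE('a) \<longrightarrow>
            (\<forall>x\<in>E. order_convergent (\<lambda>n. \<Sum>k<n. fs k x *\<^sub>R xs k) x))
       \<and> (\<forall>x\<in>E. bidual_order_convergent
                   (\<lambda>n. bidual_embed (\<Sum>k<n. fs k x *\<^sub>R xs k)) (bidual_embed x))"
proof (intro conjI impI ballI)
  fix x
  assume smc: "sigma_monotonically_complete TYPE('a)" and "x \<in> E"
  note expansion = absolute_frame_expansion[OF assms(2) \<open>x \<in> E\<close>]
  obtain C where "\<And>n. norm (\<Sum>k<n. labs (fs k x *\<^sub>R xs k)) \<le> C"
    using expansion(3) by blast
  then obtain S where "is_sup_of (range (\<lambda>n. \<Sum>k<n. labs (fs k x *\<^sub>R xs k))) S"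
    using sigma_monotonically_complete_sup_exists[OF smc expansion(2)] by auto
  with expansion(1,2) show "order_convergent (\<lambda>n. \<Sum>k<n. fs k x *\<^sub>R xs k) x"
    by (rule order_convergent_if_dominated)
next
  fix x
  assume "x \<in> E"
  note expansion = absolute_frame_expansion[OF assms(2) this]
  obtain C where "\<And>n. norm (\<Sum>k<n. labs (fs k x *\<^sub>R xs k)) \<le> C"
    using expansion(3) by blast
  with expansion(1,2)
  show "bidual_order_convergent (\<lambda>n. bidual_embed (\<Sum>k<n. fs k x *\<^sub>R xs k)) (bidual_embed x)"
    by (rule bidual_order_convergent_if_dominated)
qed

end
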